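(* For every integer $n\ge 0$, $$\sum_{k=0}^{2n}(-1)^k\binom{2n}{k}C_kC_{2n-k}=C_n\binom{2n}{n},$$ and $$\sum_{k=0}^{2n+1}(-1)^k\binom{2n+1}{k}C_kC_{2n+1-k}=0.$$
   Context: $C_k=\binom{2k}{k}\frac{1}{k+1}$ denotes the $k$-th Catalan number. *)

theory Defs
  imports Main
begin

text \<open>The k-th Catalan number C_k = binom(2k,k)/(k+1); the division is exact.\<close>
definition catalan :: "nat \<Rightarrow> nat" where
  "catalan k = ((2*k) choose k) div (k + 1)"

end

theory Submission imports Defs Complex_Main begin

text \<open>
  Write \<open>F(m,k) = (-1)^k binom(m,k) C_k C_(m-k)\<close> and \<open>S(m) = \<Sum>_k F(m,k)\<close>.
  Zeilberger's algorithm yields a rational certificate \<open>R(m,k)\<close> such that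
  \<open>G(m,k) = F(m+2,k) R(m,k)\<close> satisfies
  \<open>(m+2)(m+4) F(m+2,k) - 16 (m+1)^2 F(m,k) = G(m,k+1) - G(m,k)\<close>;
  checking this reduces, via the hypergeometric ratios of \<open>F\<close>, to a polynomial identity.
  Summing over \<open>k\<close> telescopes to \<open>(m+2)(m+4) S(m+2) = 16 (m+1)^2 S(m)\<close>.
  The right-hand side \<open>C_n binom(2n,n)\<close> satisfies the same recurrence in \<open>m = 2n\<close>,
  and \<open>S(1) = 0\<close> propagates to all odd \<open>m\<close>.
\<close>

lemma catalan_mult_Suc: "(k + 1) * catalan k = (2 * k) choose k"
proof -
  have "(k + 1) * ((2 * k) choose (k + 1)) = k * ((2 * k) choose k)"
    using binomial_absorb_comp[of "2 * k" k] times_binomial_minus1_eq[of "k + 1" "2 * k"]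
    by (simp add: mult_2)
  then have "(k + 1) * (((2 * k) choose k) - ((2 * k) choose (k + 1))) = (2 * k) choose k"
    by (simp add: diff_mult_distrib2)
  then have "(k + 1) dvd ((2 * k) choose k)"
    by (metis dvd_triv_left)
  then show ?thesis
    unfolding catalan_def by (rule dvd_mult_div_cancel)
qed

lemma central_binomial_Suc:
  "(k + 1) * ((2 * k + 2) choose (k + 1)) = 2 * (2 * k + 1) * ((2 * k) choose k)"
proof -
  have "(2 * k + 2) choose (k + 1) = ((2 * k + 1) choose k) + ((2 * k + 1) choose (k + 1))"
    by (simp add: numeral_2_eq_2)
  moreover have "(2 * k + 1) choose k = (2 * k + 1) choose (k + 1)"
    using binomial_symmetric[of k "2 * k + 1"] by simp
  moreover have "(k + 1) * ((2 * k + 1) choose (k + 1)) = (2 * k + 1) * ((2 * k) choose k)"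
    using Suc_times_binomial[of k "2 * k"] by simp
  ultimately show ?thesis
    by (simp add: algebra_simps)
qed

lemma catalan_Suc: "(k + 2) * catalan (k + 1) = 2 * (2 * k + 1) * catalan k"
proof -
  have "(k + 1) * ((k + 2) * catalan (k + 1)) = (k + 1) * ((2 * k + 2) choose (k + 1))"
    using catalan_mult_Suc[of "k + 1"] by (simp add: algebra_simps)
  also have "\<dots> = 2 * (2 * k + 1) * ((k + 1) * catalan k)"
    by (simp only: central_binomial_Suc catalan_mult_Suc)
  also have "\<dots> = (k + 1) * (2 * (2 * k + 1) * catalan k)"
    by (simp only: mult_ac)
  finally show ?thesis
    by (rule mult_left_cancel[THEN iffD1, rotated]) simp
qed

definition alt_catalan_conv_term :: "nat \<Rightarrow> nat \<Rightarrow> real" where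
  "alt_catalan_conv_term m k = (-1) ^ k * real (m choose k) * real (catalan k) * real (catalan (m - k))"

definition alt_catalan_conv :: "nat \<Rightarrow> real" where
  "alt_catalan_conv m = (\<Sum>k = 0..m. alt_catalan_conv_term m k)"

lemma alt_catalan_conv_term_eq_0: "m < k \<Longrightarrow> alt_catalan_conv_term m k = 0"
  by (simp add: alt_catalan_conv_term_def)

lemma alt_catalan_conv_term_Suc_size:
  assumes "k + i = n + 1"
  shows "2 * (real n + 1) * (2 * real i - 1) * alt_catalan_conv_term n k
       = real i * (real i + 1) * alt_catalan_conv_term (n + 1) k"
proof (cases i)
  case 0
  with assms show ?thesis
    by (simp add: alt_catalan_conv_term_eq_0)
next
  case (Suc j)
  with assms have n: "n = k + j"
    by simp
  have binomial: "(j + 1) * ((n + 1) choose k) = (n + 1) * (n choose k)"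
    using binomial_absorb_comp[of "n + 1" k] n by simp
  have "2 * (n + 1) * (2 * j + 1) * (n choose k) * catalan j
      = (2 * (2 * j + 1) * catalan j) * ((n + 1) * (n choose k))"
    by (simp only: mult_ac)
  also have "\<dots> = ((j + 2) * catalan (j + 1)) * ((j + 1) * ((n + 1) choose k))"
    by (simp only: binomial catalan_Suc)
  also have "\<dots> = (j + 1) * (j + 2) * ((n + 1) choose k) * catalan (j + 1)"
    by (simp only: mult_ac)
  finally have "real (2 * (n + 1) * (2 * j + 1) * (n choose k) * catalan j)
      = real ((j + 1) * (j + 2) * ((n + 1) choose k) * catalan (j + 1))"
    by (simp only:)
  then have "2 * (real n + 1) * (2 * real i - 1) * (real (n choose k) * real (catalan j))
      = real i * (real i + 1) * (real ((n + 1) choose k) * real (catalan (j + 1)))"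
    using Suc by (simp add: algebra_simps)
  moreover have "alt_catalan_conv_term n k = (-1) ^ k * real (catalan k) * (real (n choose k) * real (catalan j))"
    unfolding alt_catalan_conv_term_def n by simp
  moreover have "alt_catalan_conv_term (n + 1) k
      = (-1) ^ k * real (catalan k) * (real ((n + 1) choose k) * real (catalan (j + 1)))"
    unfolding alt_catalan_conv_term_def n by (simp add: Suc_diff_le)
  ultimately show ?thesis
    by (metis mult.left_commute)
qed

lemma alt_catalan_conv_term_Suc_Suc_size:
  assumes "k + i = n + 2"
  shows "4 * (real n + 1) * (real n + 2) * (2 * real i - 1) * (2 * real i - 3) * alt_catalan_conv_term n k
       = (real i - 1) * real i ^ 2 * (real i + 1) * alt_catalan_conv_term (n + 2) k"
proof (cases i)
  case 0
  with assms show ?thesis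
    by (simp add: alt_catalan_conv_term_eq_0)
next
  case (Suc j)
  with assms have "k + j = n + 1" "k + i = (n + 1) + 1"
    by simp_all
  note step_n = alt_catalan_conv_term_Suc_size[OF this(1)]
    and step_Suc_n = alt_catalan_conv_term_Suc_size[OF this(2)]
  have j: "real j = real i - 1"
    using Suc by simp
  have "4 * (real n + 1) * (real n + 2) * (2 * real i - 1) * (2 * real i - 3) * alt_catalan_conv_term n k
      = 2 * (real n + 2) * (2 * real i - 1) * (2 * (real n + 1) * (2 * real j - 1) * alt_catalan_conv_term n k)"
    unfolding j by (simp add: algebra_simps)
  also have "\<dots> = real j * (real j + 1) * (2 * (real (n + 1) + 1) * (2 * real i - 1) * alt_catalan_conv_term (n + 1) k)"
    unfolding step_n by (simp add: algebra_simps)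
  also have "\<dots> = (real i - 1) * real i ^ 2 * (real i + 1) * alt_catalan_conv_term (n + 2) k"
    unfolding step_Suc_n j by (simp add: algebra_simps power2_eq_square)
  finally show ?thesis .
qed

lemma alt_catalan_conv_term_Suc_index:
  assumes "k + i = n"
  shows "(real k + 1) * (real k + 2) * (2 * real i - 1) * alt_catalan_conv_term n (k + 1)
       = - real i * (real i + 1) * (2 * real k + 1) * alt_catalan_conv_term n k"
proof (cases i)
  case 0
  with assms show ?thesis
    by (simp add: alt_catalan_conv_term_eq_0)
next
  case (Suc j)
  with assms have n: "n = k + 1 + j"
    by simp
  have binomial: "(k + 1) * (n choose (k + 1)) = (j + 1) * (n choose k)"
    using times_binomial_minus1_eq[of "k + 1" n] binomial_absorb_comp[of n k] n by simp
  have "(k + 1) * (k + 2) * (2 * j + 1) * (n choose (k + 1)) * catalan (k + 1) * catalan j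
      = ((k + 1) * (n choose (k + 1))) * ((k + 2) * catalan (k + 1)) * ((2 * j + 1) * catalan j)"
    by (simp only: mult_ac)
  also have "\<dots> = ((j + 1) * (n choose k)) * (2 * (2 * k + 1) * catalan k) * ((2 * j + 1) * catalan j)"
    by (simp only: binomial catalan_Suc)
  also have "\<dots> = (j + 1) * (2 * k + 1) * (n choose k) * catalan k * (2 * (2 * j + 1) * catalan j)"
    by (simp only: mult_ac)
  also have "\<dots> = (j + 1) * (2 * k + 1) * (n choose k) * catalan k * ((j + 2) * catalan (j + 1))"
    by (simp only: catalan_Suc)
  finally have "real ((k + 1) * (k + 2) * (2 * j + 1) * (n choose (k + 1)) * catalan (k + 1) * catalan j)
      = real ((j + 1) * (2 * k + 1) * (n choose k) * catalan k * ((j + 2) * catalan (j + 1)))"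
    by (simp only:)
  then have "(real k + 1) * (real k + 2) * (2 * real i - 1) * (real (n choose (k + 1)) * real (catalan (k + 1)) * real (catalan j))
      = real i * (real i + 1) * (2 * real k + 1) * (real (n choose k) * real (catalan k) * real (catalan (j + 1)))"
    using Suc by (simp add: algebra_simps)
  moreover have "alt_catalan_conv_term n (k + 1)
      = - ((-1) ^ k) * (real (n choose (k + 1)) * real (catalan (k + 1)) * real (catalan j))"
    unfolding alt_catalan_conv_term_def n by simp
  ultimately have "(real k + 1) * (real k + 2) * (2 * real i - 1) * alt_catalan_conv_term n (k + 1)
      = - ((-1) ^ k) * (real i * (real i + 1) * (2 * real k + 1) * (real (n choose k) * real (catalan k) * real (catalan (j + 1))))"
    by (metis mult.left_commute)
  moreover have "alt_catalan_conv_term n k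
      = (-1) ^ k * (real (n choose k) * real (catalan k) * real (catalan (j + 1)))"
    unfolding alt_catalan_conv_term_def n by (simp add: Suc_diff_le)
  ultimately show ?thesis
    by (simp only: mult_ac mult_minus_left mult_minus_right)
qed

text \<open>Numerator of Zeilberger's certificate \<open>R(m,k)\<close> for the recurrence in steps \<open>m \<mapsto> m + 2\<close>.\<close>

definition wz_poly :: "real \<Rightarrow> real \<Rightarrow> real" where
  "wz_poly m k = -12 + 38*k - 30*k^2 + 4*k^3 - 44*m + 122*m*k - 72*m*k^2 + 8*m*k^3
     - 53*m^2 + 132*m^2*k - 54*m^2*k^2 + 4*m^2*k^3 - 25*m^3 + 56*m^3*k - 12*m^3*k^2
     - 4*m^4 + 8*m^4*k"

definition wz_certificate :: "nat \<Rightarrow> nat \<Rightarrow> real" where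
  "wz_certificate m k = - real k * (real k + 1) * wz_poly (real m) (real k)
     / ((real m + 1) * (real m + 2) * (real m + 3) * (2 * real k - 1) * (2 * (real m + 2 - real k) - 1))"

lemma wz_poly_identity:
  fixes m k i :: real
  assumes "i = m + 2 - k"
  shows "(m + 1) * (m + 2)^2 * (m + 3) * (m + 4) * (2 * i - 1) * (2 * i - 3) * (2 * k - 1)
           - 4 * (m + 1)^2 * (m + 3) * (2 * k - 1) * (i - 1) * i^2 * (i + 1)
         = i * (i + 1) * (2 * k - 1) * wz_poly m (k + 1) + k * (k + 1) * (2 * i - 3) * wz_poly m k"
  unfolding wz_poly_def assms by algebra

lemma odd_real_neq_0: "2 * real a - 2 * real b + 1 \<noteq> 0"
proof
  assume "2 * real a - 2 * real b + 1 = 0"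
  then have "real (2 * a + 1) = real (2 * b)"
    by simp
  then have "2 * a + 1 = 2 * b"
    by (simp only: of_nat_eq_iff)
  then show False
    by presburger
qed

lemma wz_certificate_mult_denominator:
  "wz_certificate m k * ((real m + 1) * (real m + 2) * (real m + 3) * (2 * real k - 1) * (2 * (real m + 2 - real k) - 1))
   = - real k * (real k + 1) * wz_poly (real m) (real k)"
proof -
  have "2 * real k - 1 \<noteq> 0" "2 * (real m + 2 - real k) - 1 \<noteq> 0"
    using odd_real_neq_0[of k 1] odd_real_neq_0[of "m + 1" k] by (simp_all add: algebra_simps)
  then show ?thesis
    unfolding wz_certificate_def by simp
qed

text \<open>
  The hypotheses are the ratios of \<open>u = F(m,k)\<close> and \<open>w = F(m+2,k+1)\<close> to \<open>v = F(m+2,k)\<close>,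
  cleared of denominators.  Taking ratios relative to \<open>F(m+2,k)\<close> rather than \<open>F(m,k)\<close>
  keeps them valid at \<open>k = m+1, m+2\<close>, so the boundary needs no separate treatment.
\<close>

lemma wz_step:
  fixes m k :: nat and u v w :: real
  defines "i \<equiv> real m + 2 - real k"
  assumes u: "4 * (real m + 1) * (real m + 2) * (2 * i - 1) * (2 * i - 3) * u = (i - 1) * i ^ 2 * (i + 1) * v"
    and w: "(real k + 1) * (real k + 2) * (2 * i - 1) * w = - i * (i + 1) * (2 * real k + 1) * v"
  shows "(real m + 2) * (real m + 4) * v - 16 * (real m + 1)^2 * u
       = w * wz_certificate m (k + 1) - v * wz_certificate m k"
proof -
  have nonzero: "2 * i - 1 \<noteq> 0" "2 * i - 3 \<noteq> 0" "2 * real k - 1 \<noteq> 0" "2 * real k + 1 \<noteq> 0"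
    using odd_real_neq_0[of "m + 1" k] odd_real_neq_0[of m k] odd_real_neq_0[of k 1] odd_real_neq_0[of k 0]
    unfolding i_def by (simp_all add: algebra_simps)
  have certificate: "wz_certificate m k * ((real m + 1) * (real m + 2) * (real m + 3) * (2 * real k - 1) * (2 * i - 1))
      = - real k * (real k + 1) * wz_poly (real m) (real k)"
    unfolding i_def by (rule wz_certificate_mult_denominator)
  have "2 * (real k + 1) - 1 = 2 * real k + 1" "real k + 1 + 1 = real k + 2"
    "2 * (real m + 2 - (real k + 1)) - 1 = 2 * i - 3"
    unfolding i_def by simp_all
  then have certificate_Suc: "wz_certificate m (k + 1) * ((real m + 1) * (real m + 2) * (real m + 3) * (2 * real k + 1) * (2 * i - 3))
      = - (real k + 1) * (real k + 2) * wz_poly (real m) (real k + 1)"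
    using wz_certificate_mult_denominator[of m "k + 1"] by (simp only: of_nat_add of_nat_1)
  let ?M = "(real m + 1) * (real m + 2) * (real m + 3) * (2 * i - 1) * (2 * i - 3) * (2 * real k - 1) * (2 * real k + 1)"
  have "((real m + 2) * (real m + 4) * v - 16 * (real m + 1)^2 * u) * ?M
      = (2 * real k + 1) * ((real m + 1) * (real m + 2)^2 * (real m + 3) * (real m + 4) * (2 * i - 1) * (2 * i - 3) * (2 * real k - 1) * v
          - 4 * (real m + 1)^2 * (real m + 3) * (2 * real k - 1) * (4 * (real m + 1) * (real m + 2) * (2 * i - 1) * (2 * i - 3) * u))"
    by algebra
  also have "\<dots> = (2 * real k + 1) * v * ((real m + 1) * (real m + 2)^2 * (real m + 3) * (real m + 4) * (2 * i - 1) * (2 * i - 3) * (2 * real k - 1)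
          - 4 * (real m + 1)^2 * (real m + 3) * (2 * real k - 1) * (i - 1) * i^2 * (i + 1))"
    unfolding u by algebra
  also have "\<dots> = (2 * real k + 1) * v * (i * (i + 1) * (2 * real k - 1) * wz_poly (real m) (real k + 1)
          + real k * (real k + 1) * (2 * i - 3) * wz_poly (real m) (real k))"
    using wz_poly_identity[of i "real m" "real k"] unfolding i_def by simp
  also have "\<dots> = w * (- (real k + 1) * (real k + 2) * wz_poly (real m) (real k + 1)) * ((2 * i - 1) * (2 * real k - 1))
          - v * (- real k * (real k + 1) * wz_poly (real m) (real k)) * ((2 * i - 3) * (2 * real k + 1))"
    using w by algebra
  also have "\<dots> = w * (wz_certificate m (k + 1) * ((real m + 1) * (real m + 2) * (real m + 3) * (2 * real k + 1) * (2 * i - 3)))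
            * ((2 * i - 1) * (2 * real k - 1))
          - v * (wz_certificate m k * ((real m + 1) * (real m + 2) * (real m + 3) * (2 * real k - 1) * (2 * i - 1)))
            * ((2 * i - 3) * (2 * real k + 1))"
    unfolding certificate certificate_Suc ..
  also have "\<dots> = (w * wz_certificate m (k + 1) - v * wz_certificate m k) * ?M"
    by algebra
  finally show ?thesis
    using nonzero by simp
qed

lemma alt_catalan_conv_telescoping:
  assumes "k \<le> m + 2"
  shows "(real m + 2) * (real m + 4) * alt_catalan_conv_term (m + 2) k - 16 * (real m + 1)^2 * alt_catalan_conv_term m k
       = alt_catalan_conv_term (m + 2) (k + 1) * wz_certificate m (k + 1) - alt_catalan_conv_term (m + 2) k * wz_certificate m k"
proof -
  obtain i where ki: "k + i = m + 2"
    using assms le_add_diff_inverse by blast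
  then have i: "real i = real m + 2 - real k"
    by (simp add: algebra_simps flip: of_nat_add)
  show ?thesis
    using alt_catalan_conv_term_Suc_Suc_size[OF ki] alt_catalan_conv_term_Suc_index[OF ki]
    unfolding i by (rule wz_step)
qed

lemma alt_catalan_conv_recurrence:
  "(real m + 2) * (real m + 4) * alt_catalan_conv (m + 2) = 16 * (real m + 1)^2 * alt_catalan_conv m"
proof -
  define G where "G k = alt_catalan_conv_term (m + 2) k * wz_certificate m k" for k
  have extended: "alt_catalan_conv m = (\<Sum>k = 0..m + 2. alt_catalan_conv_term m k)"
    unfolding alt_catalan_conv_def by (rule sum.mono_neutral_left) (auto simp: alt_catalan_conv_term_eq_0)
  have "(real m + 2) * (real m + 4) * alt_catalan_conv (m + 2) - 16 * (real m + 1)^2 * alt_catalan_conv m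
      = (\<Sum>k = 0..m + 2. (real m + 2) * (real m + 4) * alt_catalan_conv_term (m + 2) k
                          - 16 * (real m + 1)^2 * alt_catalan_conv_term m k)"
    unfolding alt_catalan_conv_def[of "m + 2"] extended by (simp only: sum_subtractf sum_distrib_left mult.assoc)
  also have "\<dots> = (\<Sum>k = 0..m + 2. G (Suc k) - G k)"
    unfolding G_def Suc_eq_plus1 by (intro sum.cong refl alt_catalan_conv_telescoping) simp
  also have "\<dots> = G (Suc (m + 2)) - G 0"
    by (rule sum_Suc_diff) simp
  also have "\<dots> = 0"
    unfolding G_def by (simp add: alt_catalan_conv_term_eq_0 wz_certificate_def)
  finally show ?thesis
    by simp
qed

lemma alt_catalan_conv_even: "alt_catalan_conv (2 * n) = real (catalan n) * real ((2 * n) choose n)"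
proof (induction n)
  case 0
  show ?case
    by (simp add: alt_catalan_conv_def alt_catalan_conv_term_def catalan_def)
next
  case (Suc n)
  have "(n + 1) * (n + 2) * (catalan (n + 1) * ((2 * n + 2) choose (n + 1)))
      = ((n + 2) * catalan (n + 1)) * ((n + 1) * ((2 * n + 2) choose (n + 1)))"
    by (simp only: mult_ac)
  also have "\<dots> = 4 * (2 * n + 1)^2 * (catalan n * ((2 * n) choose n))"
    unfolding catalan_Suc central_binomial_Suc by (simp add: power2_eq_square algebra_simps)
  finally have "real ((n + 1) * (n + 2) * (catalan (n + 1) * ((2 * n + 2) choose (n + 1))))
      = real (4 * (2 * n + 1)^2 * (catalan n * ((2 * n) choose n)))"
    by (simp only:)
  then have product: "(real n + 1) * (real n + 2) * (real (catalan (n + 1)) * real ((2 * n + 2) choose (n + 1)))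
      = 4 * (2 * real n + 1)^2 * (real (catalan n) * real ((2 * n) choose n))"
    by (simp only: of_nat_mult of_nat_add of_nat_numeral of_nat_1 of_nat_power)
  have "(real n + 1) * (real n + 2) * alt_catalan_conv (2 * n + 2) = 4 * (2 * real n + 1)^2 * alt_catalan_conv (2 * n)"
    using alt_catalan_conv_recurrence[of "2 * n"] by (simp add: algebra_simps)
  also have "\<dots> = (real n + 1) * (real n + 2) * (real (catalan (n + 1)) * real ((2 * n + 2) choose (n + 1)))"
    unfolding Suc.IH product ..
  finally have "alt_catalan_conv (2 * n + 2) = real (catalan (n + 1)) * real ((2 * n + 2) choose (n + 1))"
    by (rule mult_left_cancel[THEN iffD1, rotated]) simp
  moreover have "2 * Suc n = 2 * n + 2"
    by simp
  ultimately show ?case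
    by simp
qed

lemma alt_catalan_conv_odd: "alt_catalan_conv (2 * n + 1) = 0"
proof (induction n)
  case 0
  show ?case
    by (simp add: alt_catalan_conv_def alt_catalan_conv_term_def)
next
  case (Suc n)
  then show ?case
    using alt_catalan_conv_recurrence[of "2 * n + 1"] by (simp add: add_ac)
qed

lemma of_int_alt_catalan_conv:
  "real_of_int (\<Sum>k = 0..m. (-1::int)^k * int (m choose k) * int (catalan k) * int (catalan (m - k)))
   = alt_catalan_conv m"
  by (simp add: alt_catalan_conv_def alt_catalan_conv_term_def)

theorem mainTheorem6:
  fixes n :: nat
  shows "((\<Sum>k=0..2*n. (-1::int)^k * int ((2*n) choose k) * int (catalan k) * int (catalan (2*n - k)))
           = int (catalan n) * int ((2*n) choose n)) \<and>
         ((\<Sum>k=0..2*n+1. (-1::int)^k * int ((2*n+1) choose k) * int (catalan k) * int (catalan (2*n+1 - k))) = 0)"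
proof
  have "real_of_int (\<Sum>k=0..2*n. (-1::int)^k * int ((2*n) choose k) * int (catalan k) * int (catalan (2*n - k)))
      = real_of_int (int (catalan n) * int ((2*n) choose n))"
    unfolding of_int_alt_catalan_conv alt_catalan_conv_even by simp
  then show "(\<Sum>k=0..2*n. (-1::int)^k * int ((2*n) choose k) * int (catalan k) * int (catalan (2*n - k)))
           = int (catalan n) * int ((2*n) choose n)"
    by (simp only: of_int_eq_iff)
next
  have "real_of_int (\<Sum>k=0..2*n+1. (-1::int)^k * int ((2*n+1) choose k) * int (catalan k) * int (catalan (2*n+1 - k)))
      = real_of_int 0"
    unfolding of_int_alt_catalan_conv alt_catalan_conv_odd by simp
  then show "(\<Sum>k=0..2*n+1. (-1::int)^k * int ((2*n+1) choose k) * int (catalan k) * int (catalan (2*n+1 - k))) = 0"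
    by (simp only: of_int_eq_iff)
qed

end
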